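(* For all integers $m,n\geq 3$, let $T_{m,n}=C_m\Box C_n$. Then $\chi_i(T_{m,n})=5$ if $m\equiv 0 \pmod 5$ and $n\equiv 0 \pmod 5$, and $\chi_i(T_{m,n})=6$ otherwise.
   Context: For a graph $G$, an incidence is a pair $(v,e)$ with $v\in V(G)$, $e\in E(G)$ and $v$ incident with $e$. Two incidences $(v,e)$ and $(w,f)$ are adjacent if $v=w$, or $e=f$, or the edge $vw$ equals $e$ or $f$. An incidence $k$-coloring of $G$ is a map from the set of incidences of $G$ to a set of $k$ colors such that adjacent incidences receive distinct colors; the incidence chromatic number $\chi_i(G)$ is the least such $k$. $C_n$ denotes the cycle on $n$ vertices and $\Box$ the Cartesian product of graphs: $G\Box H$ has vertex set $V(G)\times V(H)$, with $(u_1,v_1)$ adjacent to $(u_2,v_2)$ iff either $u_1=u_2$ and $v_1v_2\in E(H)$, or $v_1=v_2$ and $u_1u_2\in E(G)$. *)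

theory Defs
  imports Main
begin

text \<open>Simple graphs are given by a vertex set V and an edge set E of 2-element subsets of V.
  Incidences only depend on E.\<close>

definition incidences :: "'a set set \<Rightarrow> ('a \<times> 'a set) set" where
  "incidences E = {(v, e). e \<in> E \<and> v \<in> e}"

definition inc_adj :: "('a \<times> 'a set) \<Rightarrow> ('a \<times> 'a set) \<Rightarrow> bool" where
  "inc_adj a b \<longleftrightarrow> fst a = fst b \<or> snd a = snd b \<or> {fst a, fst b} = snd a \<or> {fst a, fst b} = snd b"

definition incidence_coloring :: "'a set set \<Rightarrow> nat \<Rightarrow> (('a \<times> 'a set) \<Rightarrow> nat) \<Rightarrow> bool" where
  "incidence_coloring E k c \<longleftrightarrow>
     (\<forall>a \<in> incidences E. c a < k) \<and>
     (\<forall>a \<in> incidences E. \<forall>b \<in> incidences E. a \<noteq> b \<and> inc_adj a b \<longrightarrow> c a \<noteq> c b)"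

definition incidence_chromatic_number :: "'a set set \<Rightarrow> nat" where
  "incidence_chromatic_number E = (LEAST k. \<exists>c. incidence_coloring E k c)"

definition cycle_verts :: "nat \<Rightarrow> nat set" where
  "cycle_verts m = {0..<m}"

definition cycle_edges :: "nat \<Rightarrow> nat set set" where
  "cycle_edges m = {{i, (i + 1) mod m} | i. i < m}"

definition cart_edges :: "'a set \<Rightarrow> 'a set set \<Rightarrow> 'b set \<Rightarrow> 'b set set \<Rightarrow> ('a \<times> 'b) set set" where
  "cart_edges V1 E1 V2 E2 =
     {{(u1, v), (u2, v)} | u1 u2 v. {u1, u2} \<in> E1 \<and> v \<in> V2} \<union>
     {{(u, v1), (u, v2)} | u v1 v2. u \<in> V1 \<and> {v1, v2} \<in> E2}"

definition torus_edges :: "nat \<Rightarrow> nat \<Rightarrow> (nat \<times> nat) set set" where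
  "torus_edges m n = cart_edges (cycle_verts m) (cycle_edges m) (cycle_verts n) (cycle_edges n)"

end

theory Submission
  imports Defs
begin

text \<open>
  An incidence (v, vw) is the arc v \<rightarrow> w, and two incidences are adjacent exactly when the arcs
  share their tail or are consecutive. Every vertex of the torus has four out-arcs and an in-arc
  whose colour differs from all of them, so at least five colours are needed. With exactly five
  colours all arcs entering a vertex w must share one colour g w, and g is then injective on every
  closed neighbourhood: the colour classes of g are perfect codes. If r j counts the code
  vertices in row j, counting closed neighbourhoods row by row gives r (j - 1) + 3 r j + r (j + 1) = m;
  then s j = 5 r j - m satisfies s (j - 1) + 3 s j + s (j + 1) = 0, which forces
  4 \<Sum> (s j)^2 \<le> 2 \<Sum> (s j)^2, so s = 0 and 5 divides m (and symmetrically n). Conversely, if 5 divides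
  m and n, then g (i, j) = (i + 2 j) mod 5 is such a colouring.

  Six colours always suffice: every cycle C_m wraps around the bouquet of a triangle, a 4-cycle
  and a 5-cycle glued at one vertex, and a fixed table of colours on pairs of bouquet vertices,
  checked by simplification, pulls back to the torus.
\<close>

section \<open>Incidence colourings as arc colourings\<close>

definition arcs :: "'a set set \<Rightarrow> ('a \<times> 'a) set" where
  "arcs E = {(u, v). u \<noteq> v \<and> {u, v} \<in> E}"

definition neighbors :: "'a set set \<Rightarrow> 'a \<Rightarrow> 'a set" where
  "neighbors E u = {v. (u, v) \<in> arcs E}"

lemma arcs_sym: "(u, v) \<in> arcs E \<Longrightarrow> (v, u) \<in> arcs E"
  by (auto simp: arcs_def insert_commute)

definition arc_coloring :: "'a set set \<Rightarrow> nat \<Rightarrow> ('a \<Rightarrow> 'a \<Rightarrow> nat) \<Rightarrow> bool" where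
  "arc_coloring E k f \<longleftrightarrow>
     (\<forall>u v. (u, v) \<in> arcs E \<longrightarrow> f u v < k) \<and>
     (\<forall>u v w. (u, v) \<in> arcs E \<longrightarrow> (u, w) \<in> arcs E \<longrightarrow> v \<noteq> w \<longrightarrow> f u v \<noteq> f u w) \<and>
     (\<forall>u v w. (u, v) \<in> arcs E \<longrightarrow> (v, w) \<in> arcs E \<longrightarrow> f u v \<noteq> f v w)"

lemma incidences_eq_arcs:
  assumes "\<forall>e\<in>E. card e = 2"
  shows "incidences E = (\<lambda>(u, v). (u, {u, v})) ` arcs E"
proof (intro set_eqI iffI)
  fix a assume "a \<in> incidences E"
  then obtain u e where a: "a = (u, e)" "e \<in> E" "u \<in> e" by (auto simp: incidences_def)
  then obtain v where "e = {u, v}" "u \<noteq> v"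
    using assms by (metis card_2_iff insert_commute insertE singletonD)
  with a show "a \<in> (\<lambda>(u, v). (u, {u, v})) ` arcs E" by (auto simp: arcs_def)
qed (auto simp: incidences_def arcs_def)

lemma inc_adj_arcs:
  assumes "u \<noteq> v" "u' \<noteq> v'"
  shows "inc_adj (u, {u, v}) (u', {u', v'}) \<longleftrightarrow> u = u' \<or> v = u' \<or> v' = u"
  using assms by (auto simp: inc_adj_def doubleton_eq_iff)

lemma incidence_coloring_of_arc_coloring:
  assumes "\<forall>e\<in>E. card e = 2" and f: "arc_coloring E k f"
  shows "incidence_coloring E k (\<lambda>(u, e). f u (the_elem (e - {u})))" (is "incidence_coloring E k ?c")
proof -
  have f_neq: "f u v \<noteq> f u' v'"
    if "(u, v) \<in> arcs E" "(u', v') \<in> arcs E" "(u, v) \<noteq> (u', v')" "u = u' \<or> v = u' \<or> v' = u"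
    for u v u' v'
    using f that unfolding arc_coloring_def by metis
  have c_arc: "?c (u, {u, v}) = f u v" if "(u, v) \<in> arcs E" for u v
    using that by (auto simp: arcs_def insert_Diff_if)
  show ?thesis
    unfolding incidence_coloring_def incidences_eq_arcs[OF assms(1)]
  proof (intro conjI ballI impI)
    fix a assume "a \<in> (\<lambda>(u, v). (u, {u, v})) ` arcs E"
    then obtain u v where "(u, v) \<in> arcs E" "a = (u, {u, v})" by auto
    then show "?c a < k" using f c_arc by (simp add: arc_coloring_def)
  next
    fix a b assume "a \<in> (\<lambda>(u, v). (u, {u, v})) ` arcs E" "b \<in> (\<lambda>(u, v). (u, {u, v})) ` arcs E"
      and ab: "a \<noteq> b \<and> inc_adj a b"
    then obtain u v u' v' where uv: "(u, v) \<in> arcs E" "(u', v') \<in> arcs E"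
      and a: "a = (u, {u, v})" and b: "b = (u', {u', v'})" by auto
    have "u \<noteq> v" "u' \<noteq> v'" using uv by (auto simp: arcs_def)
    then have "(u, v) \<noteq> (u', v')" "u = u' \<or> v = u' \<or> v' = u"
      using ab unfolding a b by (auto simp: inc_adj_arcs)
    then show "?c a \<noteq> ?c b" unfolding a b c_arc[OF uv(1)] c_arc[OF uv(2)] by (rule f_neq[OF uv])
  qed
qed

lemma incidence_coloring_iff_arc_coloring:
  assumes "\<forall>e\<in>E. card e = 2"
  shows "(\<exists>c. incidence_coloring E k c) \<longleftrightarrow> (\<exists>f. arc_coloring E k f)"
proof
  assume "\<exists>c. incidence_coloring E k c"
  then obtain c where "incidence_coloring E k c" ..
  then have "arc_coloring E k (\<lambda>u v. c (u, {u, v}))"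
    unfolding incidence_coloring_def arc_coloring_def incidences_eq_arcs[OF assms] ball_simps
    by (auto simp: arcs_def inc_adj_arcs doubleton_eq_iff)
  then show "\<exists>f. arc_coloring E k f" by blast
next
  assume "\<exists>f. arc_coloring E k f"
  then show "\<exists>c. incidence_coloring E k c"
    using incidence_coloring_of_arc_coloring[OF assms] by blast
qed

lemma arc_coloring_out_colors:
  assumes "arc_coloring E k f"
  shows "card (f v ` neighbors E v) = card (neighbors E v)" and "f v ` neighbors E v \<subseteq> {..<k}"
    and "(u, v) \<in> arcs E \<Longrightarrow> f u v \<in> {..<k} - f v ` neighbors E v"
proof -
  have "inj_on (f v) (neighbors E v)"
    using assms unfolding inj_on_def arc_coloring_def neighbors_def by blast
  then show "card (f v ` neighbors E v) = card (neighbors E v)" by (rule card_image)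
  show "f v ` neighbors E v \<subseteq> {..<k}" "(u, v) \<in> arcs E \<Longrightarrow> f u v \<in> {..<k} - f v ` neighbors E v"
    using assms by (auto simp: arc_coloring_def neighbors_def)
qed

lemma arc_coloring_degree_less:
  assumes "arc_coloring E k f" "(u, v) \<in> arcs E"
  shows "card (neighbors E v) < k"
proof -
  note out = arc_coloring_out_colors[OF assms(1)]
  have "finite (f v ` neighbors E v)" using out(2) finite_subset by blast
  then have "card (insert (f u v) (f v ` neighbors E v)) = card (neighbors E v) + 1"
    using out(1) out(3)[OF assms(2)] by simp
  moreover have "insert (f u v) (f v ` neighbors E v) \<subseteq> {..<k}"
    using out(2) out(3)[OF assms(2)] by blast
  ultimately show ?thesis
    using card_mono[of "{..<k}"] by (metis Suc_eq_plus1 card_lessThan finite_lessThan less_eq_Suc_le)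
qed

lemma arc_coloring_in_colors_eq:
  assumes "arc_coloring E k f" "k \<le> card (neighbors E v) + 1" "(u, v) \<in> arcs E" "(u', v) \<in> arcs E"
  shows "f u v = f u' v"
proof (rule ccontr)
  assume neq: "f u v \<noteq> f u' v"
  note out = arc_coloring_out_colors[OF assms(1)]
  have "finite (f v ` neighbors E v)" using out(2) finite_subset by blast
  then have "card (insert (f u v) (insert (f u' v) (f v ` neighbors E v))) = card (neighbors E v) + 2"
    using neq out(1) out(3)[OF assms(3)] out(3)[OF assms(4)] by simp
  moreover have "insert (f u v) (insert (f u' v) (f v ` neighbors E v)) \<subseteq> {..<k}"
    using out(2) out(3)[OF assms(3)] out(3)[OF assms(4)] by blast
  ultimately have "card (neighbors E v) + 2 \<le> k"
    using card_mono[of "{..<k}"] by (metis card_lessThan finite_lessThan)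
  then show False using assms(2) by simp
qed

definition square_coloring :: "'a set set \<Rightarrow> nat \<Rightarrow> ('a \<Rightarrow> nat) \<Rightarrow> bool" where
  "square_coloring E k g \<longleftrightarrow>
     (\<forall>u v. (u, v) \<in> arcs E \<longrightarrow> g u < k \<and> g u \<noteq> g v) \<and>
     (\<forall>u v w. (u, v) \<in> arcs E \<longrightarrow> (u, w) \<in> arcs E \<longrightarrow> v \<noteq> w \<longrightarrow> g v \<noteq> g w)"

lemma arc_coloring_of_square_coloring:
  "square_coloring E k g \<Longrightarrow> arc_coloring E k (\<lambda>u v. g v)"
  unfolding square_coloring_def arc_coloring_def by (metis arcs_sym)

text \<open>With only one colour to spare, all arcs entering a vertex have the same colour.\<close>

lemma square_coloring_of_arc_coloring:
  assumes f: "arc_coloring E k f" and deg: "\<forall>(u, v) \<in> arcs E. k \<le> card (neighbors E v) + 1"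
  shows "square_coloring E k (\<lambda>v. f (SOME u. (u, v) \<in> arcs E) v)"
proof -
  have in_color: "f (SOME u. (u, v) \<in> arcs E) v = f u v" if "(u, v) \<in> arcs E" for u v
    using arc_coloring_in_colors_eq[OF f _ someI[of "\<lambda>u. (u, v) \<in> arcs E", OF that] that] deg that
    by auto
  show ?thesis
    using f unfolding square_coloring_def arc_coloring_def
    by (metis (no_types, lifting) in_color arcs_sym)
qed

section \<open>The torus\<close>

definition cyc_next :: "nat \<Rightarrow> nat \<Rightarrow> nat" where
  "cyc_next m i = (i + 1) mod m"

definition cyc_prev :: "nat \<Rightarrow> nat \<Rightarrow> nat" where
  "cyc_prev m i = (i + m - 1) mod m"

lemma cyc_next_eq: "i < m \<Longrightarrow> cyc_next m i = (if i + 1 = m then 0 else i + 1)"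
  by (simp add: cyc_next_def)

lemma cyc_prev_eq: "i < m \<Longrightarrow> cyc_prev m i = (if i = 0 then m - 1 else i - 1)"
  unfolding cyc_prev_def by (cases i) auto

lemma cyc_next_less: "i < m \<Longrightarrow> cyc_next m i < m"
  by (simp add: cyc_next_eq)

lemma cyc_prev_less: "i < m \<Longrightarrow> cyc_prev m i < m"
  by (auto simp: cyc_prev_eq)

lemma cyc_prev_next: "i < m \<Longrightarrow> cyc_prev m (cyc_next m i) = i"
  by (auto simp: cyc_next_eq cyc_prev_eq)

lemma cyc_next_prev: "i < m \<Longrightarrow> cyc_next m (cyc_prev m i) = i"
  by (auto simp: cyc_next_eq cyc_prev_eq)

lemma sum_cyc_next: "(\<Sum>i<m. f (cyc_next m i)) = (\<Sum>i<m. f i)"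
  by (rule sum.reindex_bij_betw, rule bij_betw_byWitness[where f' = "cyc_prev m"])
    (auto simp: cyc_prev_next cyc_next_prev cyc_next_less cyc_prev_less)

lemma sum_cyc_prev: "(\<Sum>i<m. f (cyc_prev m i)) = (\<Sum>i<m. f i)"
  by (rule sum.reindex_bij_betw, rule bij_betw_byWitness[where f' = "cyc_next m"])
    (auto simp: cyc_prev_next cyc_next_prev cyc_next_less cyc_prev_less)

datatype dir = East | West | North | South

lemma UNIV_dir: "UNIV = {East, West, North, South}"
  using dir.exhaust by auto

lemma all_dir: "(\<forall>d. P d) \<longleftrightarrow> P East \<and> P West \<and> P North \<and> P South"
  by (metis dir.exhaust)

fun opposite :: "dir \<Rightarrow> dir" where
  "opposite East = West"
| "opposite West = East"
| "opposite North = South"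
| "opposite South = North"

fun torus_step :: "nat \<Rightarrow> nat \<Rightarrow> dir \<Rightarrow> nat \<times> nat \<Rightarrow> nat \<times> nat" where
  "torus_step m n East (i, j) = (cyc_next m i, j)"
| "torus_step m n West (i, j) = (cyc_prev m i, j)"
| "torus_step m n North (i, j) = (i, cyc_next n j)"
| "torus_step m n South (i, j) = (i, cyc_prev n j)"

lemma torus_step_mem: "v \<in> {..<m} \<times> {..<n} \<Longrightarrow> torus_step m n d v \<in> {..<m} \<times> {..<n}"
  by (cases d; cases v) (auto simp: cyc_next_less cyc_prev_less)

lemma torus_step_opposite:
  "v \<in> {..<m} \<times> {..<n} \<Longrightarrow> torus_step m n (opposite d) (torus_step m n d v) = v"
  by (cases d; cases v) (auto simp: cyc_prev_next cyc_next_prev)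

lemma torus_step_eq_iff:
  assumes "3 \<le> m" "3 \<le> n" "v \<in> {..<m} \<times> {..<n}"
  shows "torus_step m n d v = torus_step m n d' v \<longleftrightarrow> d = d'"
  using assms by (cases d; cases d'; cases v) (auto simp: cyc_next_eq cyc_prev_eq split: if_splits)

lemma torus_step_neq:
  assumes "3 \<le> m" "3 \<le> n" "v \<in> {..<m} \<times> {..<n}"
  shows "torus_step m n d v \<noteq> v"
  using assms by (cases d; cases v) (auto simp: cyc_next_eq cyc_prev_eq split: if_splits)

lemma cycle_edges_eq: "cycle_edges m = (\<lambda>i. {i, cyc_next m i}) ` {..<m}"
proof -
  have "{g i | i. i < m} = g ` {..<m}" for g :: "nat \<Rightarrow> nat set"
    by auto
  then show ?thesis
    unfolding cycle_edges_def cyc_next_def .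
qed

lemma torus_edges_eq:
  "torus_edges m n =
     (\<lambda>v. {v, torus_step m n East v}) ` ({..<m} \<times> {..<n}) \<union>
     (\<lambda>v. {v, torus_step m n North v}) ` ({..<m} \<times> {..<n})"
proof -
  have rows: "{{(u1, v), (u2, v)} | u1 u2 v. {u1, u2} \<in> cycle_edges m \<and> v \<in> cycle_verts n}
      = (\<lambda>v. {v, torus_step m n East v}) ` ({..<m} \<times> {..<n})" (is "?E = ?F")
  proof (intro set_eqI iffI)
    fix e assume "e \<in> ?E"
    then obtain u1 u2 i j where "e = {(u1, j), (u2, j)}" "{u1, u2} = {i, cyc_next m i}" "i < m" "j < n"
      unfolding cycle_edges_eq cycle_verts_def by auto
    then have "e = {(i, j), torus_step m n East (i, j)}" "(i, j) \<in> {..<m} \<times> {..<n}"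
      by (auto simp: doubleton_eq_iff insert_commute)
    then show "e \<in> ?F" by blast
  next
    fix e assume "e \<in> ?F"
    then obtain i j where e: "e = {(i, j), (cyc_next m i, j)}" and "i < m" "j < n" by auto
    then have "{i, cyc_next m i} \<in> cycle_edges m" "j \<in> cycle_verts n"
      by (auto simp: cycle_edges_eq cycle_verts_def)
    then show "e \<in> ?E" unfolding e by blast
  qed
  have cols: "{{(u, v1), (u, v2)} | u v1 v2. u \<in> cycle_verts m \<and> {v1, v2} \<in> cycle_edges n}
      = (\<lambda>v. {v, torus_step m n North v}) ` ({..<m} \<times> {..<n})" (is "?E = ?F")
  proof (intro set_eqI iffI)
    fix e assume "e \<in> ?E"
    then obtain v1 v2 i j where "e = {(i, v1), (i, v2)}" "{v1, v2} = {j, cyc_next n j}" "i < m" "j < n"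
      unfolding cycle_edges_eq cycle_verts_def by auto
    then have "e = {(i, j), torus_step m n North (i, j)}" "(i, j) \<in> {..<m} \<times> {..<n}"
      by (auto simp: doubleton_eq_iff insert_commute)
    then show "e \<in> ?F" by blast
  next
    fix e assume "e \<in> ?F"
    then obtain i j where e: "e = {(i, j), (i, cyc_next n j)}" and "i < m" "j < n" by auto
    then have "i \<in> cycle_verts m" "{j, cyc_next n j} \<in> cycle_edges n"
      by (auto simp: cycle_edges_eq cycle_verts_def)
    then show "e \<in> ?E" unfolding e by blast
  qed
  show ?thesis
    unfolding torus_edges_def cart_edges_def rows cols ..
qed

lemma torus_edges_eq_steps:
  "torus_edges m n = {{v, torus_step m n d v} | v d. v \<in> {..<m} \<times> {..<n}}"
proof -
  have "{v, torus_step m n d v} \<in> torus_edges m n" if v: "v \<in> {..<m} \<times> {..<n}" for v d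
  proof (cases "d \<in> {East, North}")
    case True
    then show ?thesis using v unfolding torus_edges_eq by auto
  next
    case False
    then have "opposite d \<in> {East, North}" by (cases d) auto
    moreover have "{v, torus_step m n d v} =
        {torus_step m n d v, torus_step m n (opposite d) (torus_step m n d v)}"
      using torus_step_opposite[OF v] by (simp add: insert_commute)
    ultimately show ?thesis using torus_step_mem[OF v] unfolding torus_edges_eq by auto
  qed
  then show ?thesis unfolding torus_edges_eq by auto
qed

lemma card_torus_edge:
  assumes "3 \<le> m" "3 \<le> n"
  shows "\<forall>e \<in> torus_edges m n. card e = 2"
proof
  fix e assume "e \<in> torus_edges m n"
  then obtain v d where "e = {v, torus_step m n d v}" "v \<in> {..<m} \<times> {..<n}"
    unfolding torus_edges_eq_steps by blast
  then show "card e = 2" using torus_step_neq[OF assms] by (metis card_2_iff)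
qed

lemma arcs_torus_iff:
  assumes mn: "3 \<le> m" "3 \<le> n"
  shows "(u, w) \<in> arcs (torus_edges m n) \<longleftrightarrow>
    u \<in> {..<m} \<times> {..<n} \<and> (\<exists>d. w = torus_step m n d u)"
proof
  assume "(u, w) \<in> arcs (torus_edges m n)"
  then have uw: "u \<noteq> w" "{u, w} \<in> torus_edges m n"
    unfolding arcs_def by auto
  then obtain v d where e: "{u, w} = {v, torus_step m n d v}" and v: "v \<in> {..<m} \<times> {..<n}"
    unfolding torus_edges_eq_steps by blast
  then consider "u = v" "w = torus_step m n d v"
    | "u = torus_step m n d v" "w = torus_step m n (opposite d) u"
    using torus_step_opposite[OF v] uw(1) by (auto simp: doubleton_eq_iff)
  then show "u \<in> {..<m} \<times> {..<n} \<and> (\<exists>d. w = torus_step m n d u)"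
    using v torus_step_mem[OF v] by cases blast+
next
  assume "u \<in> {..<m} \<times> {..<n} \<and> (\<exists>d. w = torus_step m n d u)"
  then obtain d where w: "w = torus_step m n d u" and u: "u \<in> {..<m} \<times> {..<n}" by blast
  have "{u, w} \<in> torus_edges m n"
    using u unfolding w torus_edges_eq_steps by blast
  moreover have "u \<noteq> w" using torus_step_neq[OF mn u] unfolding w by metis
  ultimately show "(u, w) \<in> arcs (torus_edges m n)"
    unfolding arcs_def by simp
qed

lemma card_neighbors_torus:
  assumes "3 \<le> m" "3 \<le> n" "v \<in> {..<m} \<times> {..<n}"
  shows "card (neighbors (torus_edges m n) v) = 4"
proof -
  have "neighbors (torus_edges m n) v = range (\<lambda>d. torus_step m n d v)"
    using assms(3) unfolding neighbors_def arcs_torus_iff[OF assms(1,2)] by auto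
  moreover have "inj (\<lambda>d. torus_step m n d v)"
    using torus_step_eq_iff[OF assms] by (auto intro: injI)
  then have "card (range (\<lambda>d. torus_step m n d v)) = card (UNIV :: dir set)"
    by (rule card_image)
  ultimately show ?thesis by (simp add: UNIV_dir)
qed

lemma square_coloring_torus_iff:
  assumes mn: "3 \<le> m" "3 \<le> n"
  shows "square_coloring (torus_edges m n) k g \<longleftrightarrow>
    (\<forall>v \<in> {..<m} \<times> {..<n}. g v < k \<and> (\<forall>d. g v \<noteq> g (torus_step m n d v)) \<and>
       (\<forall>d d'. d \<noteq> d' \<longrightarrow> g (torus_step m n d v) \<noteq> g (torus_step m n d' v)))"
    (is "_ \<longleftrightarrow> ?local")
proof -
  note arc = arcs_torus_iff[OF mn]
  show ?thesis
  proof
    assume sq: "square_coloring (torus_edges m n) k g"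
    show ?local
    proof (intro ballI conjI allI impI)
      fix v d d' assume v: "v \<in> {..<m} \<times> {..<n}"
      then have "(v, torus_step m n d v) \<in> arcs (torus_edges m n)"
        "(v, torus_step m n d' v) \<in> arcs (torus_edges m n)"
        unfolding arc by blast+
      then show "g v < k" "g v \<noteq> g (torus_step m n d v)"
        and "d \<noteq> d' \<Longrightarrow> g (torus_step m n d v) \<noteq> g (torus_step m n d' v)"
        using sq torus_step_eq_iff[OF mn v] unfolding square_coloring_def by blast+
    qed
  next
    assume loc: ?local
    show "square_coloring (torus_edges m n) k g"
      unfolding square_coloring_def
    proof (intro conjI allI impI)
      fix u w assume "(u, w) \<in> arcs (torus_edges m n)"
      then obtain d where "u \<in> {..<m} \<times> {..<n}" "w = torus_step m n d u" unfolding arc by blast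
      then show "g u < k" "g u \<noteq> g w" using loc by blast+
    next
      fix u w w' assume "(u, w) \<in> arcs (torus_edges m n)" "(u, w') \<in> arcs (torus_edges m n)" "w \<noteq> w'"
      then obtain d d' where "u \<in> {..<m} \<times> {..<n}" "w = torus_step m n d u" "w' = torus_step m n d' u"
        unfolding arc by blast
      moreover from this have "d \<noteq> d'" using \<open>w \<noteq> w'\<close> by blast
      ultimately show "g w \<noteq> g w'" using loc by blast
    qed
  qed
qed

lemma arc_coloring_torusI:
  assumes mn: "3 \<le> m" "3 \<le> n"
    and inj: "\<And>v. v \<in> {..<m} \<times> {..<n} \<Longrightarrow> inj (out v)"
    and less: "\<And>v d. v \<in> {..<m} \<times> {..<n} \<Longrightarrow> out v d < k"
    and step: "\<And>v d d'. v \<in> {..<m} \<times> {..<n} \<Longrightarrow> out v d \<noteq> out (torus_step m n d v) d'"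
  shows "arc_coloring (torus_edges m n) k (\<lambda>v w. out v (SOME d. w = torus_step m n d v))"
proof -
  note arc = arcs_torus_iff[OF mn]
  have dir: "(SOME d'. torus_step m n d v = torus_step m n d' v) = d" if "v \<in> {..<m} \<times> {..<n}" for v d
    using torus_step_eq_iff[OF mn that] by simp
  show ?thesis
    unfolding arc_coloring_def
  proof (intro conjI allI impI)
    fix u w assume "(u, w) \<in> arcs (torus_edges m n)"
    then obtain d where "u \<in> {..<m} \<times> {..<n}" "w = torus_step m n d u" unfolding arc by blast
    then show "out u (SOME d. w = torus_step m n d u) < k" using dir less by simp
  next
    fix u w w' assume "(u, w) \<in> arcs (torus_edges m n)" "(u, w') \<in> arcs (torus_edges m n)" "w \<noteq> w'"
    then obtain d d' where u: "u \<in> {..<m} \<times> {..<n}"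
      and "w = torus_step m n d u" "w' = torus_step m n d' u"
      unfolding arc by blast
    moreover from this have "d \<noteq> d'" using \<open>w \<noteq> w'\<close> by blast
    ultimately show "out u (SOME d. w = torus_step m n d u) \<noteq> out u (SOME d. w' = torus_step m n d u)"
      using dir[OF u] inj[OF u] by (simp add: inj_eq)
  next
    fix u v w assume uv: "(u, v) \<in> arcs (torus_edges m n)" and vw: "(v, w) \<in> arcs (torus_edges m n)"
    from uv obtain d where u: "u \<in> {..<m} \<times> {..<n}" "v = torus_step m n d u" unfolding arc by blast
    from vw obtain d' where v: "v \<in> {..<m} \<times> {..<n}" "w = torus_step m n d' v" unfolding arc by blast
    show "out u (SOME d. v = torus_step m n d u) \<noteq> out v (SOME d. w = torus_step m n d v)"
      using dir step u v by simp
  qed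
qed

section \<open>Five colours\<close>

lemma arc_coloring_torus_ge_5:
  assumes mn: "3 \<le> m" "3 \<le> n" and f: "arc_coloring (torus_edges m n) k f"
  shows "5 \<le> k"
proof -
  let ?v = "(0, 0)" and ?w = "torus_step m n East (0, 0)"
  have v: "?v \<in> {..<m} \<times> {..<n}" using mn by simp
  then have "(?v, ?w) \<in> arcs (torus_edges m n)" unfolding arcs_torus_iff[OF mn] by blast
  then have "card (neighbors (torus_edges m n) ?w) < k" by (rule arc_coloring_degree_less[OF f])
  then show ?thesis using card_neighbors_torus[OF mn torus_step_mem[OF v, where d = East]] by simp
qed

lemma square_le_of_recurrence:
  fixes a x b :: "'a::linordered_idom"
  assumes "a + 3 * x + b = 0"
  shows "4 * x\<^sup>2 \<le> a\<^sup>2 + b\<^sup>2"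
proof -
  have b: "b = - a - 3 * x" using assms by (simp add: eq_neg_iff_add_eq_0 algebra_simps)
  have "a\<^sup>2 + b\<^sup>2 - 4 * x\<^sup>2 = (x + a)\<^sup>2 + (x + b)\<^sup>2"
    unfolding b by (simp add: power2_eq_square algebra_simps)
  also have "\<dots> \<ge> 0" by simp
  finally show ?thesis by simp
qed

lemma cyclic_recurrence_eq_zero:
  fixes s :: "nat \<Rightarrow> 'a::linordered_idom"
  assumes rec: "\<forall>j<n. s (cyc_prev n j) + 3 * s j + s (cyc_next n j) = 0" and "j < n"
  shows "s j = 0"
proof -
  define S where "S = (\<Sum>j<n. (s j)\<^sup>2)"
  have "4 * S \<le> (\<Sum>j<n. (s (cyc_prev n j))\<^sup>2 + (s (cyc_next n j))\<^sup>2)"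
    unfolding S_def sum_distrib_left using rec by (intro sum_mono square_le_of_recurrence) simp
  also have "\<dots> = 2 * S"
    unfolding S_def sum.distrib sum_cyc_prev[of "\<lambda>j. (s j)\<^sup>2"] sum_cyc_next[of "\<lambda>j. (s j)\<^sup>2"] by simp
  finally have "S \<le> 0" by simp
  moreover have "0 \<le> S" unfolding S_def by (simp add: sum_nonneg)
  ultimately have "(\<Sum>j<n. (s j)\<^sup>2) = 0" unfolding S_def by simp
  then show ?thesis using \<open>j < n\<close> by (simp add: sum_nonneg_eq_0_iff)
qed

lemma five_dvd_of_closed_nbhd_sums:
  fixes h :: "nat \<Rightarrow> nat \<Rightarrow> int"
  assumes "0 < n"
    and sums: "\<forall>i<m. \<forall>j<n. h i j + h (cyc_next m i) j + h (cyc_prev m i) j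
                             + h i (cyc_next n j) + h i (cyc_prev n j) = 1"
  shows "5 dvd m"
proof -
  define r where "r j = (\<Sum>i<m. h i j)" for j
  have rows: "r (cyc_prev n j) + 3 * r j + r (cyc_next n j) = int m" if "j < n" for j
  proof -
    have "int m = (\<Sum>i<m. h i j + h (cyc_next m i) j + h (cyc_prev m i) j
                            + h i (cyc_next n j) + h i (cyc_prev n j))"
      using sums that by simp
    also have "\<dots> = 3 * r j + r (cyc_next n j) + r (cyc_prev n j)"
      unfolding sum.distrib r_def sum_cyc_next[of "\<lambda>i. h i j"] sum_cyc_prev[of "\<lambda>i. h i j"] by simp
    finally show ?thesis by simp
  qed
  have "\<forall>j<n. (5 * r (cyc_prev n j) - int m) + 3 * (5 * r j - int m) + (5 * r (cyc_next n j) - int m) = 0"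
  proof (intro allI impI)
    fix j assume "j < n"
    show "(5 * r (cyc_prev n j) - int m) + 3 * (5 * r j - int m) + (5 * r (cyc_next n j) - int m) = 0"
      by (simp add: rows[OF \<open>j < n\<close>, symmetric] algebra_simps)
  qed
  then have "5 * r 0 - int m = 0"
    using \<open>0 < n\<close> by (rule cyclic_recurrence_eq_zero)
  then show ?thesis by presburger
qed

lemma of_bool_zero_sum_eq_one:
  fixes a b c d e :: nat
  assumes "distinct [a, b, c, d, e]" "{a, b, c, d, e} \<subseteq> {..<5}"
  shows "of_bool (a = 0) + of_bool (b = 0) + of_bool (c = 0) + of_bool (d = 0) + of_bool (e = 0) = (1::int)"
proof -
  have "{a, b, c, d, e} = {..<5}" using assms by (intro card_subset_eq) auto
  then have "0 \<in> {a, b, c, d, e}" by auto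
  then show ?thesis using assms(1) by auto
qed

lemma five_dvd_of_square_coloring_torus:
  assumes mn: "3 \<le> m" "3 \<le> n" and g: "square_coloring (torus_edges m n) 5 g"
  shows "5 dvd m \<and> 5 dvd n"
proof -
  define h where "h i j = (of_bool (g (i, j) = 0) :: int)" for i j
  have sums: "h i j + h (cyc_next m i) j + h (cyc_prev m i) j + h i (cyc_next n j) + h i (cyc_prev n j) = 1"
    if "i < m" "j < n" for i j
  proof -
    let ?v = "(i, j)"
    have v: "?v \<in> {..<m} \<times> {..<n}" using that by simp
    note loc = g[unfolded square_coloring_torus_iff[OF mn]]
    have "g ?v \<noteq> g (torus_step m n d ?v)" "g ?v < 5" "g (torus_step m n d ?v) < 5"
      "d \<noteq> d' \<Longrightarrow> g (torus_step m n d ?v) \<noteq> g (torus_step m n d' ?v)" for d d'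
      using loc v torus_step_mem[OF v] by blast+
    then have "distinct [g ?v, g (torus_step m n East ?v), g (torus_step m n West ?v),
        g (torus_step m n North ?v), g (torus_step m n South ?v)]"
      and "{g ?v, g (torus_step m n East ?v), g (torus_step m n West ?v),
        g (torus_step m n North ?v), g (torus_step m n South ?v)} \<subseteq> {..<5}"
      by (simp_all del: torus_step.simps)
    then have "of_bool (g ?v = 0) + of_bool (g (torus_step m n East ?v) = 0)
        + of_bool (g (torus_step m n West ?v) = 0) + of_bool (g (torus_step m n North ?v) = 0)
        + of_bool (g (torus_step m n South ?v) = 0) = (1::int)"
      by (rule of_bool_zero_sum_eq_one)
    then show ?thesis by (simp add: h_def)
  qed
  have "5 dvd m"
    using sums mn by (intro five_dvd_of_closed_nbhd_sums[of n]) auto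
  moreover have "5 dvd n"
    using sums mn by (intro five_dvd_of_closed_nbhd_sums[of m _ "\<lambda>j i. h i j"]) (auto simp: ac_simps)
  ultimately show ?thesis ..
qed

lemma five_dvd_of_arc_coloring_torus:
  assumes mn: "3 \<le> m" "3 \<le> n" and f: "arc_coloring (torus_edges m n) 5 f"
  shows "5 dvd m \<and> 5 dvd n"
proof -
  have "5 \<le> card (neighbors (torus_edges m n) v) + 1" if "(u, v) \<in> arcs (torus_edges m n)" for u v
  proof -
    have "v \<in> {..<m} \<times> {..<n}" using arcs_sym[OF that] unfolding arcs_torus_iff[OF mn] by blast
    then show ?thesis using card_neighbors_torus[OF mn] by simp
  qed
  then have "\<forall>(u, v) \<in> arcs (torus_edges m n). 5 \<le> card (neighbors (torus_edges m n) v) + 1"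
    by auto
  then show ?thesis
    by (rule five_dvd_of_square_coloring_torus[OF mn square_coloring_of_arc_coloring[OF f]])
qed

definition mod5_color :: "nat \<times> nat \<Rightarrow> nat" where
  "mod5_color v = (fst v + 2 * snd v) mod 5"

fun step_offset :: "dir \<Rightarrow> nat" where
  "step_offset East = 1"
| "step_offset West = 4"
| "step_offset North = 2"
| "step_offset South = 3"

lemma mod5_color_cong:
  assumes "a mod 5 = a' mod 5" "b mod 5 = b' mod 5"
  shows "mod5_color (a, b) = mod5_color (a', b')"
  unfolding mod5_color_def fst_conv snd_conv by (intro mod_add_cong mod_mult_cong refl assms)

lemma cyc_next_mod_dvd: "k dvd m \<Longrightarrow> cyc_next m i mod k = (i + 1) mod k"
  by (simp add: cyc_next_def mod_mod_cancel)

lemma cyc_prev_mod_dvd: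
  assumes "k dvd m" "0 < m"
  shows "cyc_prev m i mod k = (i + k - 1) mod k"
proof -
  obtain q where "m = k * q" using assms(1) ..
  with assms(2) have "i + m - 1 = (i + k - 1) + k * (q - 1)" by (cases q) auto
  then show ?thesis using assms(1) by (simp add: cyc_prev_def mod_mod_cancel)
qed

lemma mod5_color_step:
  assumes "5 dvd m" "5 dvd n" "v \<in> {..<m} \<times> {..<n}"
  shows "mod5_color (torus_step m n d v) = (fst v + 2 * snd v + step_offset d) mod 5"
proof -
  obtain i j where v: "v = (i, j)" by force
  have "0 < m" "0 < n" using assms(3) by auto
  show ?thesis
  proof (cases d)
    case East
    have "mod5_color (torus_step m n d v) = mod5_color (i + 1, j)"
      unfolding East v torus_step.simps
      by (rule mod5_color_cong) (simp_all add: cyc_next_mod_dvd assms(1))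
    then show ?thesis using East by (simp add: v mod5_color_def)
  next
    case West
    have "mod5_color (torus_step m n d v) = mod5_color (i + 4, j)"
      unfolding West v torus_step.simps
      by (rule mod5_color_cong) (simp_all add: cyc_prev_mod_dvd assms(1) \<open>0 < m\<close> add.commute)
    then show ?thesis using West by (simp add: v mod5_color_def ac_simps)
  next
    case North
    have "mod5_color (torus_step m n d v) = mod5_color (i, j + 1)"
      unfolding North v torus_step.simps
      by (rule mod5_color_cong) (simp_all add: cyc_next_mod_dvd assms(2))
    then show ?thesis using North by (simp add: v mod5_color_def)
  next
    case South
    have "mod5_color (torus_step m n d v) = mod5_color (i, j + 4)"
      unfolding South v torus_step.simps
      by (rule mod5_color_cong) (simp_all add: cyc_prev_mod_dvd assms(2) \<open>0 < n\<close> add.commute)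
    moreover have "i + 2 * (j + 4) = (i + 2 * j + 3) + 5" by simp
    ultimately show ?thesis using South
      by (simp only: v mod5_color_def fst_conv snd_conv step_offset.simps mod_add_self2)
  qed
qed

lemma mod_add_cancel_less:
  fixes x a b p :: nat
  assumes "(x + a) mod p = (x + b) mod p" "a < p" "b < p"
  shows "a = b"
proof -
  have reduce: "y mod p = (if y < p then y else y - p)" if "y < 2 * p" for y
    using that by (cases "y < p") (simp_all add: le_mod_geq)
  have "(x mod p + a) mod p = (x mod p + b) mod p"
    using assms(1) by (simp only: mod_add_left_eq)
  moreover have "x mod p < p" using assms(2) by simp
  ultimately show ?thesis
    using assms(2,3) reduce[of "x mod p + a"] reduce[of "x mod p + b"] by (simp split: if_splits)
qed

lemma square_coloring_torus_mod5:
  assumes mn: "3 \<le> m" "3 \<le> n" and "5 dvd m" "5 dvd n"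
  shows "square_coloring (torus_edges m n) 5 mod5_color"
  unfolding square_coloring_torus_iff[OF mn]
proof (intro ballI conjI allI impI)
  fix v d d' assume v: "v \<in> {..<m} \<times> {..<n}"
  note cancel = mod_add_cancel_less[where p = 5]
  have offset: "0 < step_offset d" "step_offset d < 5" "step_offset d' < 5"
      "step_offset d = step_offset d' \<longleftrightarrow> d = d'"
    by (cases d; cases d'; simp)+
  show "mod5_color v < 5" by (simp add: mod5_color_def)
  have "(fst v + 2 * snd v + 0) mod 5 \<noteq> (fst v + 2 * snd v + step_offset d) mod 5"
    using cancel[of "fst v + 2 * snd v" 0 "step_offset d"] offset(1,2) by auto
  then show "mod5_color v \<noteq> mod5_color (torus_step m n d v)"
    unfolding mod5_color_step[OF assms(3,4) v] by (simp add: mod5_color_def)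
  have "(fst v + 2 * snd v + step_offset d) mod 5 \<noteq> (fst v + 2 * snd v + step_offset d') mod 5"
    if "d \<noteq> d'"
    using cancel[of "fst v + 2 * snd v" "step_offset d" "step_offset d'"] offset(2-4) that by auto
  then show "d \<noteq> d' \<Longrightarrow> mod5_color (torus_step m n d v) \<noteq> mod5_color (torus_step m n d' v)"
    unfolding mod5_color_step[OF assms(3,4) v] .
qed

section \<open>Six colours\<close>

definition bouquet_arcs :: "(nat \<times> nat) list" where
  "bouquet_arcs =
     [(0, 1), (1, 2), (2, 0), (0, 3), (3, 4), (4, 5), (5, 0), (0, 6), (6, 7), (7, 8), (8, 9), (9, 0)]"

text \<open>
  A closed walk of length m in the bouquet: (m - t) / 3 turns around the triangle 0-1-2, then one turn
  around the 4-cycle 0-3-4-5 (if t = 4) or the 5-cycle 0-6-7-8-9 (if t = 5), where t \<in> {0, 4, 5}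
  and t \<equiv> m (mod 3).
\<close>

definition bouquet_walk :: "nat \<Rightarrow> nat \<Rightarrow> nat" where
  "bouquet_walk m i =
     (let b = m - (if m mod 3 = 0 then 0 else if m mod 3 = 1 then 4 else 5)
      in if i \<le> b then i mod 3 else if m mod 3 = 1 then i - b + 2 else i - b + 5)"

lemma bouquet_walk_arc:
  assumes "3 \<le> m" "i < m"
  shows "(bouquet_walk m i, bouquet_walk m (cyc_next m i)) \<in> set bouquet_arcs"
proof -
  define t :: nat where "t = (if m mod 3 = 0 then 0 else if m mod 3 = 1 then 4 else 5)"
  define b where "b = m - t"
  have t: "t = 0 \<and> m mod 3 = 0 \<or> t = 4 \<and> m mod 3 = 1 \<or> t = 5 \<and> m mod 3 = 2"
    unfolding t_def by presburger
  then have b: "b + t = m" "b mod 3 = 0" using assms(1) unfolding b_def by presburger+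
  have walk: "bouquet_walk m k = (if k \<le> b then k mod 3 else k - b + (if t = 4 then 2 else 5))" for k
    unfolding bouquet_walk_def b_def t_def by auto
  consider "i + 1 = m" | "i + 1 < m" "i + 1 \<le> b" | "i = b" "i + 1 < m" | "b < i" "i + 1 < m"
    using assms(2) by linarith
  then show ?thesis
  proof cases
    case 1
    then have "t = 0 \<and> i mod 3 = 2 \<or> t = 4 \<and> i - b = 3 \<or> t = 5 \<and> i - b = 4"
      using t b by presburger
    then show ?thesis using 1 b unfolding walk cyc_next_eq[OF assms(2)] bouquet_arcs_def by auto
  next
    case 2
    then have "bouquet_walk m i = i mod 3" "bouquet_walk m (cyc_next m i) = (i + 1) mod 3"
      by (simp_all add: walk cyc_next_eq[OF assms(2)])
    moreover have "i mod 3 = 0 \<and> (i + 1) mod 3 = 1 \<or> i mod 3 = 1 \<and> (i + 1) mod 3 = 2 \<or>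
        i mod 3 = 2 \<and> (i + 1) mod 3 = 0"
      by presburger
    ultimately show ?thesis unfolding bouquet_arcs_def by auto
  next
    case 3
    then have "t = 4 \<or> t = 5" using t b by auto
    then show ?thesis using 3 b unfolding walk cyc_next_eq[OF assms(2)] bouquet_arcs_def by auto
  next
    case 4
    then have "bouquet_walk m i = i - b + (if t = 4 then 2 else 5)"
      "bouquet_walk m (cyc_next m i) = i - b + 1 + (if t = 4 then 2 else 5)"
      by (simp_all add: walk cyc_next_eq[OF assms(2)])
    moreover have "t = 4 \<and> (i - b = 1 \<or> i - b = 2) \<or> t = 5 \<and> (i - b = 1 \<or> i - b = 2 \<or> i - b = 3)"
      using 4 t b by auto
    ultimately show ?thesis unfolding bouquet_arcs_def by (elim disjE conjE) simp_all
  qed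
qed

text \<open>
  t x q d is the colour of the arc leaving, in direction d, a torus vertex whose coordinates are
  labelled x and q; the horizontal labels walk along the arcs of A, the vertical ones along B.
\<close>

definition table_coloring ::
    "('a \<times> 'a) set \<Rightarrow> ('b \<times> 'b) set \<Rightarrow> nat \<Rightarrow> ('a \<Rightarrow> 'b \<Rightarrow> dir \<Rightarrow> nat) \<Rightarrow> bool" where
  "table_coloring A B k t \<longleftrightarrow>
     (\<forall>x \<in> Domain A. \<forall>q \<in> Domain B. inj (t x q) \<and> (\<forall>d. t x q d < k)) \<and>
     (\<forall>x y q d. (x, y) \<in> A \<longrightarrow> q \<in> Domain B \<longrightarrow> t x q East \<noteq> t y q d \<and> t y q West \<noteq> t x q d) \<and>
     (\<forall>x q r d. (q, r) \<in> B \<longrightarrow> x \<in> Domain A \<longrightarrow> t x q North \<noteq> t x r d \<and> t x r South \<noteq> t x q d)"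

lemma arc_coloring_torus_of_table:
  assumes mn: "3 \<le> m" "3 \<le> n" and t: "table_coloring A B k t"
    and walk_x: "\<And>i. i < m \<Longrightarrow> (wx i, wx (cyc_next m i)) \<in> A"
    and walk_y: "\<And>j. j < n \<Longrightarrow> (wy j, wy (cyc_next n j)) \<in> B"
  shows "\<exists>f. arc_coloring (torus_edges m n) k f"
proof -
  define out where "out v = t (wx (fst v)) (wy (snd v))" for v
  have dom_x: "wx i \<in> Domain A" if "i < m" for i using walk_x[OF that] by blast
  have dom_y: "wy j \<in> Domain B" if "j < n" for j using walk_y[OF that] by blast
  have back_x: "(wx (cyc_prev m i), wx i) \<in> A" if "i < m" for i
    using walk_x[OF cyc_prev_less[OF that]] by (simp add: cyc_next_prev[OF that])
  have back_y: "(wy (cyc_prev n j), wy j) \<in> B" if "j < n" for j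
    using walk_y[OF cyc_prev_less[OF that]] by (simp add: cyc_next_prev[OF that])
  have cell: "inj (t x q)" "t x q d < k" if "x \<in> Domain A" "q \<in> Domain B" for x q d
    using t that unfolding table_coloring_def by blast+
  have horiz: "t x q East \<noteq> t y q d" "t y q West \<noteq> t x q d" if "(x, y) \<in> A" "q \<in> Domain B" for x y q d
    using t that unfolding table_coloring_def by blast+
  have vert: "t x q North \<noteq> t x r d" "t x r South \<noteq> t x q d" if "(q, r) \<in> B" "x \<in> Domain A" for x q r d
    using t that unfolding table_coloring_def by blast+
  have "arc_coloring (torus_edges m n) k (\<lambda>v w. out v (SOME d. w = torus_step m n d v))"
  proof (rule arc_coloring_torusI[OF mn])
    fix v d d' assume "v \<in> {..<m} \<times> {..<n}"
    then obtain i j where v: "v = (i, j)" "i < m" "j < n" by auto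
    show "inj (out v)" "out v d < k"
      using cell[OF dom_x[OF v(2)] dom_y[OF v(3)]] by (simp_all add: out_def v)
    show "out v d \<noteq> out (torus_step m n d v) d'"
    proof (cases d)
      case East
      then show ?thesis using horiz(1)[OF walk_x[OF v(2)] dom_y[OF v(3)]] by (simp add: out_def v)
    next
      case West
      then show ?thesis using horiz(2)[OF back_x[OF v(2)] dom_y[OF v(3)]] by (simp add: out_def v)
    next
      case North
      then show ?thesis using vert(1)[OF walk_y[OF v(3)] dom_x[OF v(2)]] by (simp add: out_def v)
    next
      case South
      then show ?thesis using vert(2)[OF back_y[OF v(3)] dom_x[OF v(2)]] by (simp add: out_def v)
    qed
  qed
  then show ?thesis by blast
qed

text \<open>Entry x, q lists the colours in the directions East, West, North, South.\<close>

definition six_table :: "nat list list list" where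
  "six_table =
    [[[2, 5, 1, 0], [0, 5, 2, 3], [5, 3, 4, 1], [0, 3, 5, 4], [3, 4, 0, 1], [5, 3, 4, 2], [4, 0, 2, 3], [3, 4, 0, 5], [3, 1, 5, 2], [1, 2, 3, 4]],
     [[5, 3, 0, 4], [5, 1, 4, 2], [2, 0, 1, 3], [3, 2, 4, 1], [1, 2, 5, 0], [2, 0, 1, 3], [3, 5, 2, 1], [4, 1, 5, 0], [1, 0, 4, 2], [3, 0, 2, 5]],
     [[4, 2, 0, 3], [4, 3, 2, 1], [0, 4, 1, 5], [2, 5, 4, 1], [5, 3, 2, 0], [0, 5, 1, 4], [5, 4, 2, 1], [1, 3, 5, 0], [0, 3, 2, 4], [0, 4, 5, 1]],
     [[5, 4, 3, 1], [1, 4, 5, 2], [4, 2, 0, 3], [4, 1, 5, 2], [4, 2, 1, 0], [4, 0, 2, 3], [2, 1, 5, 0], [1, 2, 0, 4], [2, 4, 1, 5], [4, 5, 0, 3]],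
     [[1, 0, 2, 4], [5, 0, 4, 3], [3, 1, 5, 2], [0, 3, 1, 5], [3, 5, 0, 2], [2, 5, 3, 1], [3, 4, 0, 5], [4, 3, 5, 2], [1, 3, 4, 0], [1, 2, 3, 5]],
     [[4, 3, 0, 2], [4, 2, 3, 1], [0, 4, 1, 5], [1, 2, 4, 5], [5, 1, 2, 0], [1, 0, 5, 4], [1, 2, 4, 5], [2, 1, 3, 0], [0, 5, 2, 4], [0, 4, 5, 3]],
     [[3, 4, 0, 5], [5, 4, 3, 2], [4, 2, 1, 0], [5, 1, 3, 2], [1, 5, 2, 4], [4, 0, 1, 3], [5, 1, 3, 2], [1, 2, 4, 0], [2, 0, 1, 5], [4, 0, 2, 3]],
     [[1, 2, 5, 4], [4, 1, 2, 0], [1, 5, 0, 3], [4, 0, 1, 3], [3, 0, 5, 2], [0, 2, 3, 1], [1, 4, 2, 3], [4, 5, 3, 0], [5, 4, 0, 1], [1, 5, 3, 2]],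
     [[5, 3, 4, 0], [0, 3, 1, 2], [3, 4, 2, 5], [0, 5, 3, 2], [0, 4, 2, 1], [3, 4, 1, 5], [3, 5, 0, 2], [5, 2, 3, 1], [1, 2, 0, 4], [3, 4, 2, 5]],
     [[4, 1, 0, 3], [1, 4, 3, 2], [0, 1, 2, 5], [2, 1, 4, 5], [2, 5, 1, 3], [0, 2, 5, 4], [1, 4, 5, 2], [2, 0, 1, 3], [0, 3, 2, 5], [0, 1, 5, 4]]]"

fun dir_index :: "dir \<Rightarrow> nat" where
  "dir_index East = 0"
| "dir_index West = 1"
| "dir_index North = 2"
| "dir_index South = 3"

definition six_color :: "nat \<Rightarrow> nat \<Rightarrow> dir \<Rightarrow> nat" where
  "six_color x q d = six_table ! x ! q ! dir_index d"

lemma dir_index_range_inj: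
  assumes "length c = 4"
  shows "range (\<lambda>d. c ! dir_index d) = set c" and "inj (\<lambda>d. c ! dir_index d) \<longleftrightarrow> distinct c"
proof -
  obtain a b e f where c: "c = [a, b, e, f]"
    using assms by (auto simp: numeral_eq_Suc length_Suc_conv)
  show "range (\<lambda>d. c ! dir_index d) = set c" by (auto simp: c UNIV_dir)
  show "inj (\<lambda>d. c ! dir_index d) \<longleftrightarrow> distinct c" by (auto simp: c inj_def all_dir)
qed

text \<open>The table is checked row by row, so that evaluation visits each entry only a few times.\<close>

lemma six_table_checks:
  "\<forall>row \<in> set six_table. length row = 10 \<and>
     (\<forall>c \<in> set row. length c = 4 \<and> distinct c \<and> (\<forall>a \<in> set c. a < 6))"
  "\<forall>(x, y) \<in> set bouquet_arcs.
     list_all2 (\<lambda>c c'. c ! 0 \<notin> set c' \<and> c' ! 1 \<notin> set c) (six_table ! x) (six_table ! y)"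
  "\<forall>(q, r) \<in> set bouquet_arcs. \<forall>row \<in> set six_table.
     row ! q ! 2 \<notin> set (row ! r) \<and> row ! r ! 3 \<notin> set (row ! q)"
  "length six_table = 10"
  by (simp_all add: six_table_def bouquet_arcs_def)

lemma six_color_cell:
  assumes "x < 10" "q < 10"
  shows "inj (six_color x q)" and "six_color x q d \<in> set (six_table ! x ! q)" and "six_color x q d < 6"
proof -
  have row: "six_table ! x \<in> set six_table" using assms(1) six_table_checks(4) by simp
  then have "length (six_table ! x) = 10" using six_table_checks(1) by blast
  then have "six_table ! x ! q \<in> set (six_table ! x)" using assms(2) by simp
  then have c: "length (six_table ! x ! q) = 4" "distinct (six_table ! x ! q)"
    "\<forall>a \<in> set (six_table ! x ! q). a < 6"
    using six_table_checks(1) row by blast+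
  show "inj (six_color x q)" "six_color x q d \<in> set (six_table ! x ! q)"
    using dir_index_range_inj[OF c(1)] c(2) unfolding six_color_def by auto
  then show "six_color x q d < 6" using c(3) by blast
qed

lemma table_coloring_six_color: "table_coloring (set bouquet_arcs) (set bouquet_arcs) 6 six_color"
proof -
  note checks = six_table_checks
  have arc_less: "x < 10" "y < 10" if "(x, y) \<in> set bouquet_arcs" for x y
    using that by (auto simp: bouquet_arcs_def)
  have row: "six_table ! x \<in> set six_table" if "x < 10" for x
    using that checks(4) by simp
  have horiz: "six_table ! x ! q ! 0 \<notin> set (six_table ! y ! q) \<and> six_table ! y ! q ! 1 \<notin> set (six_table ! x ! q)"
    if "(x, y) \<in> set bouquet_arcs" "q < 10" for x y q
    using checks(2) that list_all2_nthD[of _ "six_table ! x" "six_table ! y" q] checks(1)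
      row[OF arc_less(1)[OF that(1)]]
    by fastforce
  have vert: "six_table ! x ! q ! 2 \<notin> set (six_table ! x ! r) \<and> six_table ! x ! r ! 3 \<notin> set (six_table ! x ! q)"
    if "(q, r) \<in> set bouquet_arcs" "x < 10" for x q r
    using checks(3) that row[OF that(2)] by fastforce
  show ?thesis
    unfolding table_coloring_def
  proof (intro conjI ballI allI impI)
    fix x q d assume "x \<in> Domain (set bouquet_arcs)" "q \<in> Domain (set bouquet_arcs)"
    then have "x < 10" "q < 10" using arc_less by blast+
    then show "inj (six_color x q)" "six_color x q d < 6" by (rule six_color_cell)+
  next
    fix x y q d assume "(x, y) \<in> set bouquet_arcs" "q \<in> Domain (set bouquet_arcs)"
    moreover from this have "x < 10" "y < 10" "q < 10" using arc_less by blast+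
    ultimately show "six_color x q East \<noteq> six_color y q d" "six_color y q West \<noteq> six_color x q d"
      using horiz six_color_cell(2) unfolding six_color_def[of _ _ East] six_color_def[of _ _ West]
      by force+
  next
    fix x q r d assume "(q, r) \<in> set bouquet_arcs" "x \<in> Domain (set bouquet_arcs)"
    moreover from this have "x < 10" "q < 10" "r < 10" using arc_less by blast+
    ultimately show "six_color x q North \<noteq> six_color x r d" "six_color x r South \<noteq> six_color x q d"
      using vert six_color_cell(2) unfolding six_color_def[of _ _ North] six_color_def[of _ _ South]
      by force+
  qed
qed

lemma arc_coloring_torus_6:
  assumes "3 \<le> m" "3 \<le> n"
  shows "\<exists>f. arc_coloring (torus_edges m n) 6 f"
  by (rule arc_coloring_torus_of_table[where wx = "bouquet_walk m" and wy = "bouquet_walk n",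
        OF assms table_coloring_six_color bouquet_walk_arc[OF assms(1)] bouquet_walk_arc[OF assms(2)]])

theorem theorem1:
  fixes m n :: nat
  assumes "m \<ge> 3" and "n \<ge> 3"
  shows "incidence_chromatic_number (torus_edges m n) =
           (if 5 dvd m \<and> 5 dvd n then 5 else 6)"
proof -
  let ?E = "torus_edges m n"
  have chi: "incidence_chromatic_number ?E = (LEAST k. \<exists>f. arc_coloring ?E k f)"
    unfolding incidence_chromatic_number_def
      incidence_coloring_iff_arc_coloring[OF card_torus_edge[OF assms]] ..
  have lower: "5 \<le> k" if "arc_coloring ?E k f" for k f
    using arc_coloring_torus_ge_5[OF assms that] .
  show ?thesis
  proof (cases "5 dvd m \<and> 5 dvd n")
    case True
    then have "arc_coloring ?E 5 (\<lambda>u v. mod5_color v)"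
      by (intro arc_coloring_of_square_coloring square_coloring_torus_mod5 assms) auto
    then have "(LEAST k. \<exists>f. arc_coloring ?E k f) = 5"
      using lower by (intro Least_equality) blast+
    then show ?thesis using True chi by simp
  next
    case False
    have "k \<noteq> 5" if "arc_coloring ?E k f" for k f
      using False five_dvd_of_arc_coloring_torus[OF assms] that by blast
    then have "(LEAST k. \<exists>f. arc_coloring ?E k f) = 6"
      using arc_coloring_torus_6[OF assms] lower by (intro Least_equality) (blast, fastforce)
    then show ?thesis using False chi by simp
  qed
qed

end
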